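(* Let $N\ge 2$ and let $p$ be odd with $3\le p\le 2N-1$. Let $\Lambda=\Lambda^\bullet(\mathbb{C}^{N\times N})$ be the exterior algebra on the $N^2$ odd generators $\Psi_{ij}$, $V_R=\Lambda^R$, and $q:=\mathrm{Tr}(\Psi^p)=\sum_{i_1,\dots,i_p=1}^N\Psi_{i_1i_2}\Psi_{i_2i_3}\cdots\Psi_{i_pi_1}\in\Lambda^p$. Let $Q_R:V_R\to V_{R+p}$, $Q_R(a)=q\wedge a$, and let $\langle a,b\rangle$ denote the coefficient of the top-degree component $[a\wedge b]_{\Lambda^{N^2}}$ (with respect to a fixed generator of $\Lambda^{N^2}$). Then for all $a\in V_R$ and $b\in V_{N^2-p-R}$, \[ \langle Q_Ra,\,b\rangle=(-1)^{pR}\langle a,\,Q_{N^2-p-R}\,b\rangle. \] Consequently $r_R=r_{N^2-p-R}$ for all $R$, where $r_R:=\operatorname{rank}Q_R$, and the rank polynomial $\mathcal R_{p,N}(x)=\sum_R r_Rx^R$ is palindromic of degree $N^2-p$.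
   Context: Here $r_R:=0$ when $R<0$ or $R>N^2-p$. The product $\Psi_{i_1i_2}\cdots\Psi_{i_pi_1}$ is the wedge product in $\Lambda$. *)

theory Defs
  imports Complex_Main "HOL-Library.Function_Algebras" "HOL-Computational_Algebra.Polynomial" "HOL-Library.FuncSet"
begin

text \<open>An element is represented by
its coefficient function on finite sets of generators (the basis monomial of a set S is the
wedge of its elements in lexicographic order).\<close>

type_synonym ext = "(nat \<times> nat) set \<Rightarrow> complex"

definition gens :: "nat \<Rightarrow> (nat \<times> nat) set" where
  "gens N = {0..<N} \<times> {0..<N}"

definition lexless :: "nat \<times> nat \<Rightarrow> nat \<times> nat \<Rightarrow> bool" where
  "lexless x y \<longleftrightarrow> fst x < fst y \<or> (fst x = fst y \<and> snd x < snd y)"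

definition wsign :: "(nat \<times> nat) set \<Rightarrow> (nat \<times> nat) set \<Rightarrow> complex" where
  "wsign S T = (-1) ^ card {(s, t). s \<in> S \<and> t \<in> T \<and> lexless t s}"

definition wedge :: "ext \<Rightarrow> ext \<Rightarrow> ext" where
  "wedge a b = (\<lambda>U. if finite U then (\<Sum>S\<in>Pow U. wsign S (U - S) * a S * b (U - S)) else 0)"

definition ext_one :: ext where
  "ext_one = (\<lambda>S. if S = {} then 1 else 0)"

definition Psi :: "nat \<Rightarrow> nat \<Rightarrow> ext" where
  "Psi i j = (\<lambda>S. if S = {(i, j)} then 1 else 0)"

definition hom :: "nat \<Rightarrow> nat \<Rightarrow> ext set" where
  "hom N R = {a. \<forall>S. a S \<noteq> 0 \<longrightarrow> S \<subseteq> gens N \<and> card S = R}"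

definition qTr :: "nat \<Rightarrow> nat \<Rightarrow> ext" where
  "qTr N p = (\<lambda>U. \<Sum>i\<in>PiE {0..<p} (\<lambda>_. {0..<N}).
       foldr wedge (map (\<lambda>k. Psi (i k) (i (Suc k mod p))) [0..<p]) ext_one U)"

definition Qmap :: "nat \<Rightarrow> nat \<Rightarrow> ext \<Rightarrow> ext" where
  "Qmap N p a = wedge (qTr N p) a"

definition pairing :: "nat \<Rightarrow> ext \<Rightarrow> ext \<Rightarrow> complex" where
  "pairing N a b = wedge a b (gens N)"

definition cscale :: "complex \<Rightarrow> ext \<Rightarrow> ext" where
  "cscale c f = (\<lambda>S. c * f S)"

definition rk :: "nat \<Rightarrow> nat \<Rightarrow> int \<Rightarrow> nat" where
  "rk N p R = (if R < 0 \<or> R > int (N^2) - int p then 0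
               else vector_space.dim cscale (Qmap N p ` hom N (nat R)))"

definition rank_poly :: "nat \<Rightarrow> nat \<Rightarrow> int poly" where
  "rank_poly N p = (\<Sum>R\<le>N^2 - p. monom (int (rk N p (int R))) R)"

end

theory Submission
  imports Defs
begin

text \<open>
  Graded commutativity moves q past a homogeneous a of degree R at the cost of the sign
  (-1)^(p R), and associativity of the wedge product then gives
  <q /\ a, b> = (-1)^(p R) <a, q /\ b>.  As the top-degree pairing of degree m with degree
  N^2 - m is perfect, this adjointness bounds rank Q_R by rank Q_(N^2-p-R) and, symmetrically,
  conversely; so the rank polynomial is palindromic.  It has degree N^2 - p because
  r_(N^2-p) = r_0 = dim span {q} and q is nonzero: for p = 2k + 1 <= 2N - 1 the monomial
  Psi_01 Psi_11 Psi_12 Psi_22 ... Psi_kk Psi_k0 arises in Tr(Psi^p) only from the p cyclic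
  rotations of the closed walk 0, 1, 1, 2, 2, ..., k, k, so its coefficient is a sum of an odd
  number of signs.
\<close>

section \<open>Linear algebra\<close>

context vector_space
begin

lemma dim_le_card_if_separating:
  fixes f :: "'b \<Rightarrow> 'b \<Rightarrow> 'a"
  assumes W: "subspace W" and B: "finite B" "independent B"
    and f_add: "\<And>c x y. c \<in> B \<Longrightarrow> f c (x + y) = f c x + f c y"
    and f_scale: "\<And>c r x. c \<in> B \<Longrightarrow> f c (scale r x) = r * f c x"
    and separating: "\<And>x. x \<in> W \<Longrightarrow> (\<And>c. c \<in> B \<Longrightarrow> f c x = 0) \<Longrightarrow> x = 0"
  shows "dim W \<le> card B"
proof -
  interpret vector_space_pair scale scale ..
  define L where "L x = (\<Sum>c\<in>B. scale (f c x) c)" for x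
  have L: "Vector_Spaces.linear scale scale L"
    unfolding Vector_Spaces.linear_iff L_def
    by (simp add: vector_space_axioms f_add f_scale scale_left_distrib sum.distrib scale_sum_right
        cong: sum.cong)
  obtain C where C: "C \<subseteq> W" "independent C" "W \<subseteq> span C" "card C = dim W"
    by (rule basis_exists)
  have span_C: "span C = W"
    using span_minimal[OF C(1) W] C(3) by auto
  have "inj_on L (span C)"
  proof (subst linear_inj_on_iff_eq_0[OF L subspace_span], intro ballI impI)
    fix x
    assume "x \<in> span C" "L x = 0"
    moreover have "f c x = 0" if "c \<in> B" for c
      using dependent_finite[OF B(1)] B(2) \<open>L x = 0\<close> that unfolding L_def by auto
    ultimately show "x = 0"
      using separating span_C by auto
  qed
  then have "independent (L ` C)" "card (L ` C) = card C"
    using linear_independent_injective_image[OF L C(2)] card_image inj_on_subset[OF _ span_superset]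
    by auto
  moreover have "L ` C \<subseteq> span B"
    unfolding L_def by (blast intro: span_sum span_scale span_base)
  ultimately show ?thesis
    using independent_span_bound[OF B(1)] C(4) by fastforce
qed

lemma dim_pos_if_nonzero:
  assumes "x \<in> W" "x \<noteq> 0" "W \<subseteq> span F" "finite F"
  shows "0 < dim W"
proof -
  obtain B where B: "B \<subseteq> W" "independent B" "W \<subseteq> span B" "card B = dim W"
    by (rule basis_exists)
  have "finite B"
    using independent_span_bound[OF assms(4) B(2)] B(1) assms(3) by blast
  moreover have "B \<noteq> {}"
    using B(3) assms(1,2) by auto
  ultimately have "0 < card B"
    by (simp add: card_gt_0_iff)
  then show ?thesis
    using B(4) by simp
qed

lemma dim_image_le_dim_image_of_adjoint:
  fixes \<beta> :: "'b \<Rightarrow> 'b \<Rightarrow> 'a" and T T' :: "'b \<Rightarrow> 'b"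
  assumes T: "Vector_Spaces.linear scale scale T" and A: "subspace A"
    and finite_dim: "T' ` B \<subseteq> span F" "finite F"
    and add_left: "\<And>x x' y. \<beta> (x + x') y = \<beta> x y + \<beta> x' y"
    and scale_left: "\<And>r x y. \<beta> (scale r x) y = r * \<beta> x y"
    and add_right: "\<And>x y y'. \<beta> x (y + y') = \<beta> x y + \<beta> x y'"
    and scale_right: "\<And>x r y. \<beta> x (scale r y) = r * \<beta> x y"
    and adjoint: "\<And>a b. a \<in> A \<Longrightarrow> b \<in> B \<Longrightarrow> \<beta> (T a) b = c * \<beta> a (T' b)"
    and nondegenerate: "\<And>x. x \<in> T ` A \<Longrightarrow> (\<And>b. b \<in> B \<Longrightarrow> \<beta> x b = 0) \<Longrightarrow> x = 0"
  shows "dim (T ` A) \<le> dim (T' ` B)"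
proof -
  interpret vector_space_pair scale scale ..
  obtain D where D: "D \<subseteq> T' ` B" "independent D" "T' ` B \<subseteq> span D" "card D = dim (T' ` B)"
    by (rule basis_exists)
  have "finite D"
    using independent_span_bound[OF finite_dim(2) D(2)] D(1) finite_dim(1) by blast
  define pre where "pre = inv_into B T'"
  have pre: "pre d \<in> B" "T' (pre d) = d" if "d \<in> D" for d
    using D(1) that unfolding pre_def by (auto intro: inv_into_into f_inv_into_f)
  have "dim (T ` A) \<le> card D"
  proof (rule dim_le_card_if_separating[where f = "\<lambda>d x. \<beta> x (pre d)"])
    show "subspace (T ` A)"
      by (rule linear_subspace_image[OF T A])
    fix x
    assume x: "x \<in> T ` A" and orth: "\<And>d. d \<in> D \<Longrightarrow> \<beta> x (pre d) = 0"
    then obtain a where a: "a \<in> A" "x = T a"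
      by auto
    show "x = 0"
    proof (rule nondegenerate[OF x])
      fix b
      assume b: "b \<in> B"
      show "\<beta> x b = 0"
      proof (cases "c = 0")
        case False
        have "\<beta> a d = 0" if "d \<in> D" for d
          using orth[OF that] adjoint[OF a(1) pre(1)[OF that]] pre(2)[OF that] False a(2) by simp
        then have "D \<subseteq> {y. \<beta> a y = 0}"
          by blast
        moreover have "subspace {y. \<beta> a y = 0}"
          unfolding subspace_def using scale_right[of a 0] by (simp add: add_right scale_right)
        ultimately have "span D \<subseteq> {y. \<beta> a y = 0}"
          by (rule span_minimal)
        then have "\<beta> a (T' b) = 0"
          using D(3) b by auto
        then show ?thesis
          using adjoint[OF a(1) b] a(2) by simp
      qed (use adjoint[OF a(1) b] a(2) in simp)
    qed
  qed (use \<open>finite D\<close> D(2) add_left scale_left in auto)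
  then show ?thesis
    using D(4) by simp
qed

end

lemma palindromic_sum_monom:
  fixes c :: "nat \<Rightarrow> 'a::comm_monoid_add"
  assumes sym: "\<And>n. n \<le> D \<Longrightarrow> c (D - n) = c n" and lead: "c D \<noteq> 0"
  shows "degree (\<Sum>n\<le>D. monom (c n) n) = D"
    and "reflect_poly (\<Sum>n\<le>D. monom (c n) n) = (\<Sum>n\<le>D. monom (c n) n)"
proof -
  let ?P = "\<Sum>n\<le>D. monom (c n) n"
  have coeff: "coeff ?P n = (if n \<le> D then c n else 0)" for n
    by (simp add: coeff_sum)
  show degree: "degree ?P = D"
    by (rule antisym[OF degree_le le_degree]) (auto simp: coeff lead)
  show "reflect_poly ?P = ?P"
    by (rule poly_eqI) (simp add: coeff_reflect_poly degree coeff sym)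
qed

lemma sum_fun_apply: "(\<Sum>i\<in>A. f i) x = (\<Sum>i\<in>A. f i x)"
  by (induction A rule: infinite_finite_induct) auto

section \<open>The exterior algebra\<close>

interpretation ext: vector_space cscale
  by unfold_locales (auto simp: cscale_def fun_eq_iff algebra_simps)

lemma finite_inversions:
  "finite S \<Longrightarrow> finite T \<Longrightarrow> finite {(s, t). s \<in> S \<and> t \<in> T \<and> lexless t s}"
  by (rule finite_subset[of _ "S \<times> T"]) auto

lemma wsign_Un_left:
  assumes "A \<inter> B = {}" "finite A" "finite B" "finite C"
  shows "wsign (A \<union> B) C = wsign A C * wsign B C"
proof -
  have split: "{(s, t). s \<in> A \<union> B \<and> t \<in> C \<and> lexless t s} =
      {(s, t). s \<in> A \<and> t \<in> C \<and> lexless t s} \<union> {(s, t). s \<in> B \<and> t \<in> C \<and> lexless t s}"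
    by auto
  show ?thesis
    unfolding wsign_def split
    by (subst card_Un_disjoint) (use assms finite_inversions in \<open>auto simp: power_add\<close>)
qed

lemma wsign_Un_right:
  assumes "B \<inter> C = {}" "finite A" "finite B" "finite C"
  shows "wsign A (B \<union> C) = wsign A B * wsign A C"
proof -
  have split: "{(s, t). s \<in> A \<and> t \<in> B \<union> C \<and> lexless t s} =
      {(s, t). s \<in> A \<and> t \<in> B \<and> lexless t s} \<union> {(s, t). s \<in> A \<and> t \<in> C \<and> lexless t s}"
    by auto
  show ?thesis
    unfolding wsign_def split
    by (subst card_Un_disjoint) (use assms finite_inversions in \<open>auto simp: power_add\<close>)
qed

lemma wsign_empty_right [simp]: "wsign S {} = 1"
  by (simp add: wsign_def)

lemma wsign_singleton_left: "wsign {e} T = (-1) ^ card {x \<in> T. lexless x e}"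
proof -
  have "card {(s, t). s \<in> {e} \<and> t \<in> T \<and> lexless t s} = card {x \<in> T. lexless x e}"
    by (rule bij_betw_same_card[of snd]) (auto simp: bij_betw_def inj_on_def image_def)
  then show ?thesis
    by (simp add: wsign_def)
qed

lemma wsign_nonzero [simp]: "wsign S T \<noteq> 0"
  by (simp add: wsign_def)

lemma wsign_commute:
  assumes "S \<inter> T = {}" "finite S" "finite T"
  shows "wsign T S = (-1) ^ (card S * card T) * wsign S T"
proof -
  let ?X = "{(s, t). s \<in> S \<and> t \<in> T \<and> lexless t s}"
  let ?Y = "{(s, t). s \<in> S \<and> t \<in> T \<and> lexless s t}"
  have "lexless t s \<or> lexless s t" if "s \<in> S" "t \<in> T" for s t
    using that assms(1) unfolding lexless_def by (cases s; cases t) auto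
  then have "?X \<union> ?Y = S \<times> T"
    by auto
  moreover have "?X \<inter> ?Y = {}"
    unfolding lexless_def by auto
  moreover have "finite ?Y"
    by (rule finite_subset[of _ "S \<times> T"]) (use assms in auto)
  ultimately have count: "card ?X + card ?Y = card S * card T"
    using card_Un_disjoint[of ?X ?Y] assms finite_inversions[of S T]
    by (simp add: card_cartesian_product)
  have "wsign T S = (-1) ^ card ?Y"
    unfolding wsign_def
    by (rule arg_cong[where f = "power (-1)"], rule bij_betw_same_card[of "\<lambda>(a, b). (b, a)"])
      (auto simp: bij_betw_def inj_on_def image_def)
  also have "\<dots> = (-1) ^ (card S * card T) * wsign S T"
    unfolding count[symmetric] wsign_def power_add
    by (simp add: algebra_simps flip: power2_eq_square)
  finally show ?thesis .
qed

lemma wsign_cocycle: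
  assumes "T \<subseteq> S" "S \<subseteq> U" "finite U"
  shows "wsign S (U - S) * wsign T (S - T) = wsign T (U - T) * wsign (S - T) (U - S)"
proof -
  have "finite S"
    using assms(2,3) by (rule finite_subset)
  then have fin: "finite S" "finite T"
    using assms(1) finite_subset by blast+
  have "wsign S (U - S) = wsign T (U - S) * wsign (S - T) (U - S)"
    using wsign_Un_left[of T "S - T" "U - S"] assms fin by (simp add: Un_absorb1)
  moreover have "wsign T (U - T) = wsign T (S - T) * wsign T (U - S)"
  proof -
    have "U - T = (S - T) \<union> (U - S)"
      using assms by blast
    then show ?thesis
      using wsign_Un_right[of "S - T" "U - S" T] assms fin by auto
  qed
  ultimately show ?thesis
    by (simp add: mult_ac)
qed

lemma wedge_finite: "finite U \<Longrightarrow> wedge a b U = (\<Sum>S\<in>Pow U. wsign S (U - S) * a S * b (U - S))"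
  by (simp add: wedge_def)

lemma wedge_infinite: "infinite U \<Longrightarrow> wedge a b U = 0"
  by (simp add: wedge_def)

lemma wedge_assoc: "wedge (wedge a b) c = wedge a (wedge b c)"
proof (rule ext)
  fix U :: "(nat \<times> nat) set"
  show "wedge (wedge a b) c U = wedge a (wedge b c) U"
  proof (cases "finite U")
    case False
    then show ?thesis
      by (simp add: wedge_infinite)
  next
    case fin: True
    let ?f = "\<lambda>S T. wsign S (U - S) * wsign T (S - T) * a T * b (S - T) * c (U - S)"
    let ?g = "\<lambda>T X. wsign T (U - T) * a T * (wsign X (U - T - X) * b X * c (U - T - X))"
    have "wedge (wedge a b) c U = (\<Sum>S\<in>Pow U. \<Sum>T\<in>Pow S. ?f S T)"
      unfolding wedge_finite[OF fin]
      by (rule sum.cong[OF refl])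
        (auto simp: wedge_finite finite_subset[OF _ fin] sum_distrib_left sum_distrib_right
          mult.assoc)
    also have "\<dots> = (\<Sum>(S, T)\<in>Sigma (Pow U) Pow. ?f S T)"
      by (rule sum.Sigma) (use fin finite_subset in auto)
    also have "\<dots> = (\<Sum>(T, X)\<in>Sigma (Pow U) (\<lambda>T. Pow (U - T)). ?g T X)"
    proof (rule sum.reindex_bij_witness[of _ "\<lambda>(T, X). (T \<union> X, T)" "\<lambda>(S, T). (T, S - T)"])
      fix st
      assume "st \<in> Sigma (Pow U) Pow"
      then obtain S T where st: "st = (S, T)" "T \<subseteq> S" "S \<subseteq> U"
        by auto
      have diff: "U - T - (S - T) = U - S"
        using st by auto
      have "?g T (S - T)
          = (wsign T (U - T) * wsign (S - T) (U - S)) * (a T * b (S - T) * c (U - S))"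
        by (simp only: diff mult_ac)
      also have "\<dots> = ?f S T"
        by (simp only: wsign_cocycle[OF st(2,3) fin, symmetric] mult_ac)
      finally show "(case (\<lambda>(S, T). (T, S - T)) st of (T, X) \<Rightarrow> ?g T X)
          = (case st of (S, T) \<Rightarrow> ?f S T)"
        using st(1) by simp
    qed auto
    also have "\<dots> = (\<Sum>T\<in>Pow U. \<Sum>X\<in>Pow (U - T). ?g T X)"
      by (rule sum.Sigma[symmetric]) (use fin in auto)
    also have "\<dots> = wedge a (wedge b c) U"
      unfolding wedge_finite[OF fin]
      by (rule sum.cong[OF refl]) (auto simp: wedge_finite fin sum_distrib_left)
    finally show ?thesis .
  qed
qed

lemma wedge_add_left: "wedge (x + y) b = wedge x b + wedge y b"
  by (auto simp: wedge_def fun_eq_iff sum.distrib algebra_simps)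

lemma wedge_add_right: "wedge a (x + y) = wedge a x + wedge a y"
  by (auto simp: wedge_def fun_eq_iff sum.distrib algebra_simps)

lemma wedge_cscale_left: "wedge (cscale c x) b = cscale c (wedge x b)"
  by (auto simp: wedge_def fun_eq_iff cscale_def sum_distrib_left algebra_simps)

lemma wedge_cscale_right: "wedge a (cscale c x) = cscale c (wedge a x)"
  by (auto simp: wedge_def fun_eq_iff cscale_def sum_distrib_left algebra_simps)

lemma finite_gens [simp]: "finite (gens N)"
  by (simp add: gens_def)

lemma card_gens [simp]: "card (gens N) = N\<^sup>2"
  by (simp add: gens_def power2_eq_square)

lemma homD: "a \<in> hom N r \<Longrightarrow> a S \<noteq> 0 \<Longrightarrow> S \<subseteq> gens N \<and> card S = r"
  by (auto simp: hom_def)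

lemma hom_subspace: "ext.subspace (hom N r)"
  unfolding ext.subspace_def
proof (intro conjI ballI allI)
  fix x y
  assume x: "x \<in> hom N r" and y: "y \<in> hom N r"
  show "x + y \<in> hom N r"
    unfolding hom_def
  proof (intro CollectI allI impI)
    fix S
    assume "(x + y) S \<noteq> 0"
    then have "x S \<noteq> 0 \<or> y S \<noteq> 0"
      by auto
    then show "S \<subseteq> gens N \<and> card S = r"
      using homD x y by blast
  qed
qed (auto simp: hom_def cscale_def)

lemma wedge_hom:
  assumes a: "a \<in> hom N r" and b: "b \<in> hom N s"
  shows "wedge a b \<in> hom N (r + s)"
  unfolding hom_def
proof (intro CollectI allI impI)
  fix U
  assume ne: "wedge a b U \<noteq> 0"
  then have fin: "finite U"
    by (metis wedge_infinite)
  then obtain S where S: "S \<subseteq> U" "wsign S (U - S) * a S * b (U - S) \<noteq> 0"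
    using ne sum.not_neutral_contains_not_neutral unfolding wedge_finite[OF fin] by blast
  then have "S \<subseteq> gens N" "card S = r" "U - S \<subseteq> gens N" "card (U - S) = s"
    using homD[OF a] homD[OF b] by auto
  moreover have "card U = card S + card (U - S)"
    using S(1) fin by (simp add: card_Diff_subset finite_subset card_mono)
  ultimately show "U \<subseteq> gens N \<and> card U = r + s"
    using S(1) by auto
qed

lemma wedge_commute:
  assumes a: "a \<in> hom N r" and b: "b \<in> hom N s"
  shows "wedge a b = cscale ((-1) ^ (r * s)) (wedge b a)"
proof
  fix U :: "(nat \<times> nat) set"
  show "wedge a b U = cscale ((-1) ^ (r * s)) (wedge b a) U"
  proof (cases "finite U")
    case False
    then show ?thesis
      by (simp add: wedge_infinite cscale_def)
  next
    case fin: True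
    have summand: "wsign S (U - S) * a S * b (U - S)
        = (-1) ^ (r * s) * (wsign (U - S) S * b (U - S) * a S)"
      if "S \<subseteq> U" for S
    proof (cases "a S = 0 \<or> b (U - S) = 0")
      case False
      then have "card S = r" "card (U - S) = s"
        using homD[OF a] homD[OF b] by auto
      moreover have "finite S"
        using that fin by (rule finite_subset)
      ultimately show ?thesis
        using wsign_commute[of S "U - S"] fin by simp
    qed auto
    have "wedge b a U = (\<Sum>S\<in>Pow U. wsign (U - S) (U - (U - S)) * b (U - S) * a (U - (U - S)))"
      unfolding wedge_finite[OF fin]
      by (rule sum.reindex_bij_witness[of _ "\<lambda>S. U - S" "\<lambda>S. U - S"]) (auto simp: double_diff)
    also have "\<dots> = (\<Sum>S\<in>Pow U. wsign (U - S) S * b (U - S) * a S)"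
      by (rule sum.cong[OF refl]) (auto simp: double_diff)
    finally have swapped: "wedge b a U = \<dots>" .
    have "wedge a b U = (\<Sum>S\<in>Pow U. (-1) ^ (r * s) * (wsign (U - S) S * b (U - S) * a S))"
      unfolding wedge_finite[OF fin] by (rule sum.cong[OF refl]) (simp add: summand)
    then show ?thesis
      unfolding cscale_def swapped sum_distrib_left .
  qed
qed

lemma wedge_ext_one_right:
  assumes "a \<in> hom N r"
  shows "wedge a ext_one = a"
proof
  fix U
  show "wedge a ext_one U = a U"
  proof (cases "finite U")
    case True
    have "wedge a ext_one U = (\<Sum>S\<in>Pow U. if S = U then a U else 0)"
      unfolding wedge_finite[OF True]
    proof (rule sum.cong[OF refl])
      fix S
      assume "S \<in> Pow U"
      then have "U - S = {} \<longleftrightarrow> S = U"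
        by auto
      then show "wsign S (U - S) * a S * ext_one (U - S) = (if S = U then a U else 0)"
        by (auto simp: ext_one_def)
    qed
    also have "\<dots> = a U"
      by (simp add: True)
    finally show ?thesis .
  next
    case False
    then show ?thesis
      using homD[OF assms, of U] finite_subset[OF _ finite_gens] by (auto simp: wedge_infinite)
  qed
qed

definition ext_monomial :: "(nat \<times> nat) set \<Rightarrow> ext" where
  "ext_monomial S = (\<lambda>T. if T = S then 1 else 0)"

lemma hom_subset_span_monomials: "hom N r \<subseteq> ext.span (ext_monomial ` Pow (gens N))"
proof
  fix x
  assume x: "x \<in> hom N r"
  have "x = (\<Sum>S\<in>Pow (gens N). cscale (x S) (ext_monomial S))"
  proof
    fix T
    have "(\<Sum>S\<in>Pow (gens N). cscale (x S) (ext_monomial S)) T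
        = (\<Sum>S\<in>Pow (gens N). if S = T then x T else 0)"
      unfolding sum_fun_apply cscale_def ext_monomial_def by (rule sum.cong) auto
    also have "\<dots> = x T"
      using homD[OF x, of T] by auto
    finally show "x T = (\<Sum>S\<in>Pow (gens N). cscale (x S) (ext_monomial S)) T" ..
  qed
  also have "\<dots> \<in> ext.span (ext_monomial ` Pow (gens N))"
    by (intro ext.span_sum ext.span_scale ext.span_base) auto
  finally show "x \<in> ext.span (ext_monomial ` Pow (gens N))" .
qed

lemma pairing_nondegenerate:
  assumes x: "x \<in> hom N m" and m: "m \<le> N\<^sup>2"
    and orth: "\<And>b. b \<in> hom N (N\<^sup>2 - m) \<Longrightarrow> pairing N x b = 0"
  shows "x = 0"
proof (rule ccontr)
  assume "x \<noteq> 0"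
  then obtain S where xS: "x S \<noteq> 0"
    by (auto simp: fun_eq_iff)
  then have S: "S \<subseteq> gens N" "card S = m"
    using homD[OF x] by auto
  have "card (gens N - S) = N\<^sup>2 - m"
    using S by (simp add: card_Diff_subset finite_subset)
  then have "ext_monomial (gens N - S) \<in> hom N (N\<^sup>2 - m)"
    by (auto simp: hom_def ext_monomial_def)
  moreover have "pairing N x (ext_monomial (gens N - S)) = wsign S (gens N - S) * x S"
  proof -
    have "pairing N x (ext_monomial (gens N - S))
        = (\<Sum>T\<in>Pow (gens N). if T = S then wsign S (gens N - S) * x S else 0)"
      unfolding pairing_def wedge_finite[OF finite_gens]
    proof (rule sum.cong[OF refl])
      fix T
      assume "T \<in> Pow (gens N)"
      then have "gens N - T = gens N - S \<longleftrightarrow> T = S"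
        using S by auto
      then show "wsign T (gens N - T) * x T * ext_monomial (gens N - S) (gens N - T)
          = (if T = S then wsign S (gens N - S) * x S else 0)"
        by (auto simp: ext_monomial_def)
    qed
    then show ?thesis
      using S by simp
  qed
  ultimately show False
    using orth xS by fastforce
qed

section \<open>Multiplication by the trace and its ranks\<close>

primrec inversions :: "(nat \<times> nat) list \<Rightarrow> nat" where
  "inversions [] = 0"
| "inversions (e # es) = card {x \<in> set es. lexless x e} + inversions es"

lemma wedge_Psi:
  "wedge (Psi i j) X U =
    (if finite U \<and> (i, j) \<in> U then wsign {(i, j)} (U - {(i, j)}) * X (U - {(i, j)}) else 0)"
proof (cases "finite U")
  case True
  have "wedge (Psi i j) X U
      = (\<Sum>S\<in>Pow U. if S = {(i, j)} then wsign {(i, j)} (U - {(i, j)}) * X (U - {(i, j)}) else 0)"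
    unfolding wedge_finite[OF True] by (rule sum.cong) (auto simp: Psi_def)
  then show ?thesis
    using True by (simp add: eq_commute[of _ "{(i, j)}"])
qed (simp add: wedge_infinite)

lemma foldr_wedge_Psi:
  "foldr wedge (map (\<lambda>(i, j). Psi i j) es) ext_one U =
    (if distinct es \<and> set es = U then (-1) ^ inversions es else 0)"
proof (induction es arbitrary: U)
  case Nil
  then show ?case
    by (auto simp: ext_one_def)
next
  case (Cons e es)
  have iff: "distinct (e # es) \<and> set (e # es) = U
      \<longleftrightarrow> finite U \<and> e \<in> U \<and> distinct es \<and> set es = U - {e}"
    by auto
  show ?case
    using Cons.IH[of "U - {e}"] unfolding iff
    by (cases e) (auto simp: wedge_Psi wsign_singleton_left power_add)
qed

definition walk :: "nat \<Rightarrow> (nat \<Rightarrow> nat) \<Rightarrow> (nat \<times> nat) list" where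
  "walk p i = map (\<lambda>k. (i k, i (Suc k mod p))) [0..<p]"

lemma qTr_coeff: "qTr N p U = (\<Sum>i\<in>PiE {0..<p} (\<lambda>_. {0..<N}).
      if distinct (walk p i) \<and> set (walk p i) = U then (-1) ^ inversions (walk p i) else 0)"
proof -
  have "map (\<lambda>k. Psi (i k) (i (Suc k mod p))) [0..<p] = map (\<lambda>(i, j). Psi i j) (walk p i)" for i
    by (simp add: walk_def)
  then show ?thesis
    unfolding qTr_def by (simp add: foldr_wedge_Psi)
qed

lemma qTr_hom:
  assumes "0 < p"
  shows "qTr N p \<in> hom N p"
  unfolding hom_def
proof (intro CollectI allI impI)
  fix U
  assume "qTr N p U \<noteq> 0"
  then obtain i where "i \<in> PiE {0..<p} (\<lambda>_. {0..<N})"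
    "(if distinct (walk p i) \<and> set (walk p i) = U then (-1) ^ inversions (walk p i) else 0) \<noteq> (0::complex)"
    unfolding qTr_coeff using sum.not_neutral_contains_not_neutral by blast
  then have i: "i \<in> PiE {0..<p} (\<lambda>_. {0..<N})" "distinct (walk p i)" "set (walk p i) = U"
    by (auto split: if_splits)
  have "card U = p"
    using i distinct_card[of "walk p i"] by (simp add: walk_def)
  moreover have "U \<subseteq> gens N"
    using i assms by (auto simp: walk_def gens_def PiE_iff)
  ultimately show "U \<subseteq> gens N \<and> card U = p"
    by simp
qed

lemma Qmap_hom: "0 < p \<Longrightarrow> a \<in> hom N R \<Longrightarrow> Qmap N p a \<in> hom N (p + R)"
  unfolding Qmap_def by (rule wedge_hom[OF qTr_hom])

lemma Qmap_linear: "Vector_Spaces.linear cscale cscale (Qmap N p)"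
  unfolding Vector_Spaces.linear_iff Qmap_def
  by (simp add: wedge_add_right wedge_cscale_right ext.vector_space_axioms)

lemma pairing_Qmap_adjoint:
  assumes "0 < p" "a \<in> hom N R"
  shows "pairing N (Qmap N p a) b = (-1) ^ (p * R) * pairing N a (Qmap N p b)"
proof -
  have "pairing N (Qmap N p a) b = pairing N (cscale ((-1) ^ (p * R)) (wedge a (qTr N p))) b"
    unfolding Qmap_def wedge_commute[OF qTr_hom[OF assms(1)] assms(2)] ..
  also have "\<dots> = (-1) ^ (p * R) * pairing N a (Qmap N p b)"
    unfolding pairing_def Qmap_def wedge_cscale_left wedge_assoc by (simp add: cscale_def)
  finally show ?thesis .
qed

lemma dim_Qmap_image_le:
  assumes p: "0 < p" and degrees: "R + p + R' = N\<^sup>2"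
  shows "ext.dim (Qmap N p ` hom N R) \<le> ext.dim (Qmap N p ` hom N R')"
proof (rule ext.dim_image_le_dim_image_of_adjoint[OF Qmap_linear hom_subspace])
  show "Qmap N p ` hom N R' \<subseteq> ext.span (ext_monomial ` Pow (gens N))"
    using hom_subset_span_monomials Qmap_hom[OF p] by blast
  show "finite (ext_monomial ` Pow (gens N))"
    by simp
  show "a \<in> hom N R \<Longrightarrow> pairing N (Qmap N p a) b = (-1) ^ (p * R) * pairing N a (Qmap N p b)" for a b
    by (rule pairing_Qmap_adjoint[OF p])
  show "x = 0" if x: "x \<in> Qmap N p ` hom N R" and orth: "\<And>b. b \<in> hom N R' \<Longrightarrow> pairing N x b = 0" for x
  proof (rule pairing_nondegenerate)
    show "x \<in> hom N (p + R)"
      using x Qmap_hom[OF p] by blast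
    have "N\<^sup>2 - (p + R) = R'"
      using degrees by simp
    then show "pairing N x b = 0" if "b \<in> hom N (N\<^sup>2 - (p + R))" for b
      using orth that by simp
  qed (use degrees in simp)
  show "pairing N (x + x') y = pairing N x y + pairing N x' y" for x x' y
    by (simp add: pairing_def wedge_add_left)
  show "pairing N x (y + y') = pairing N x y + pairing N x y'" for x y y'
    by (simp add: pairing_def wedge_add_right)
  show "pairing N (cscale r x) y = r * pairing N x y" for r x y
    unfolding pairing_def wedge_cscale_left by (simp add: cscale_def)
  show "pairing N x (cscale r y) = r * pairing N x y" for x r y
    unfolding pairing_def wedge_cscale_right by (simp add: cscale_def)
qed

lemma rk_symmetric:
  assumes "0 < p"
  shows "rk N p R = rk N p (int (N\<^sup>2) - int p - R)"
proof (cases "R < 0 \<or> R > int (N\<^sup>2) - int p")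
  case False
  define R' where "R' = int (N\<^sup>2) - int p - R"
  have "nat R + p + nat R' = N\<^sup>2" "nat R' + p + nat R = N\<^sup>2"
    using False unfolding R'_def by linarith+
  then have "ext.dim (Qmap N p ` hom N (nat R)) = ext.dim (Qmap N p ` hom N (nat R'))"
    using dim_Qmap_image_le[OF assms] by (meson antisym)
  then show ?thesis
    using False by (simp add: rk_def R'_def)
qed (auto simp: rk_def)

section \<open>Nonvanishing of the trace\<close>

lemma inj_on_add_mod: "inj_on (\<lambda>t. (t + s) mod p) {0..<p::nat}"
proof (rule inj_onI)
  fix x y
  assume "x \<in> {0..<p}" "y \<in> {0..<p}" "(x + s) mod p = (y + s) mod p"
  moreover from this obtain q1 q2 where "x + s + p * q1 = y + s + p * q2"
    by (auto simp: nat_mod_eq_iff)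
  then have "(x + p * q1) mod p = (y + p * q2) mod p"
    by simp
  ultimately show "x = y"
    by simp
qed

lemma cyclic_predecessor:
  assumes "m < (p::nat)"
  shows "\<exists>m'<p. Suc m' mod p = m"
proof (cases m)
  case 0
  then show ?thesis
    using assms by (intro exI[of _ "p - 1"]) simp
next
  case (Suc m')
  then show ?thesis
    using assms by (intro exI[of _ m']) simp
qed

lemma sum_neg_one_power_nonzero:
  fixes f :: "'b \<Rightarrow> nat"
  assumes "finite A" "odd (card A)"
  shows "(\<Sum>x\<in>A. (-1::'a::ring_char_0) ^ f x) \<noteq> 0"
proof -
  have "even (\<Sum>x\<in>A. (-1::int) ^ f x) \<longleftrightarrow> even (card A)"
    using assms(1) by (induction A rule: finite_induct) auto
  then have "(\<Sum>x\<in>A. (-1::int) ^ f x) \<noteq> 0"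
    using assms(2) by auto
  then have "of_int (\<Sum>x\<in>A. (-1::int) ^ f x) \<noteq> (0::'a)"
    using of_int_eq_0_iff by blast
  then show ?thesis
    by simp
qed

definition cycle_vertex :: "nat \<Rightarrow> nat" where
  "cycle_vertex t = (t + 1) div 2"

definition cycle_edge :: "nat \<Rightarrow> nat \<Rightarrow> nat \<times> nat" where
  "cycle_edge p u = (cycle_vertex u, cycle_vertex (Suc u mod p))"

definition cycle_rotation :: "nat \<Rightarrow> nat \<Rightarrow> nat \<Rightarrow> nat" where
  "cycle_rotation p s t = (if t < p then cycle_vertex ((t + s) mod p) else undefined)"

lemma cycle_vertex_eqD:
  "cycle_vertex a = cycle_vertex b \<Longrightarrow> a = b \<or> (odd a \<and> b = Suc a) \<or> (odd b \<and> a = Suc b)"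
  unfolding cycle_vertex_def by presburger

lemma cycle_vertex_eq_0_iff [simp]: "cycle_vertex a = 0 \<longleftrightarrow> a = 0"
  unfolding cycle_vertex_def by presburger

lemma cycle_vertex_0 [simp]: "cycle_vertex 0 = 0"
  by simp

lemma inj_on_cycle_edge: "inj_on (cycle_edge p) {0..<p}"
proof (rule inj_onI, rule ccontr)
  have no_step: False if "cycle_edge p u = cycle_edge p (Suc u)" "odd u" "Suc u < p" for u
  proof -
    have "cycle_vertex (Suc u) = cycle_vertex (Suc (Suc u) mod p)"
      using that(1,3) by (simp add: cycle_edge_def)
    then show False
      using that(2,3) cycle_vertex_eqD[of "Suc u" "Suc (Suc u)"]
      by (cases "Suc (Suc u) = p") auto
  qed
  fix u u'
  assume "u \<in> {0..<p}" "u' \<in> {0..<p}" "cycle_edge p u = cycle_edge p u'" "u \<noteq> u'"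
  then show False
    using cycle_vertex_eqD[of u u'] no_step[of u] no_step[of u'] by (auto simp: cycle_edge_def)
qed

text \<open>
  A vertex j >= 1 is entered only along (j - 1, j) and along its loop (j, j); hence a closed walk
  using every edge exactly once takes the loop right after (j - 1, j), and its successor edges
  are forced.
\<close>

lemma cycle_edge_successor:
  assumes p: "2 \<le> p" and inj: "inj_on E {0..<p}" and edges: "E ` {0..<p} = cycle_edge p ` {0..<p}"
    and linked: "\<And>t. fst (E (Suc t mod p)) = snd (E t)"
    and t: "t < p" and u: "u < p" and Et: "E t = cycle_edge p u"
  shows "E (Suc t mod p) = cycle_edge p (Suc u mod p)"
proof -
  have edge_of: "\<exists>u'<p. E t' = cycle_edge p u'" if "t' < p" for t'
    using edges that by fastforce
  have position_of: "\<exists>t'<p. E t' = cycle_edge p u'" if "u' < p" for u'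
    using edges that by (metis atLeastLessThan_iff image_iff zero_le)
  have E_eq: "t' = t''" if "t' < p" "t'' < p" "E t' = E t''" for t' t''
    using inj that by (auto dest: inj_onD)
  obtain u' where u': "u' < p" "E (Suc t mod p) = cycle_edge p u'"
    using edge_of[of "Suc t mod p"] p by auto
  have "Suc t mod p \<noteq> t"
    using t p by (cases "Suc t = p") auto
  then have "u' \<noteq> u"
    using E_eq[of "Suc t mod p" t] t p u' Et by auto
  moreover have "cycle_vertex u' = cycle_vertex (Suc u mod p)"
    using linked[of t] u' Et by (simp add: cycle_edge_def)
  ultimately consider "u' = Suc u mod p" | "odd (Suc u mod p)" "u' = Suc (Suc u mod p)"
    using cycle_vertex_eqD[of u' "Suc u mod p"] u u' by (cases "Suc u = p") auto
  then show ?thesis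
  proof cases
    case 1
    then show ?thesis
      using u' by simp
  next
    case 2
    then have Suc_u: "Suc u < p" "Suc u mod p = Suc u"
      using u by (cases "Suc u = p", auto)+
    obtain m where m: "m < p" "E m = cycle_edge p (Suc u)"
      using position_of[OF Suc_u(1)] by blast
    obtain m' where m': "m' < p" "Suc m' mod p = m"
      using cyclic_predecessor[OF m(1)] by blast
    obtain u'' where u'': "u'' < p" "E m' = cycle_edge p u''"
      using edge_of[OF m'(1)] by blast
    have "m' \<noteq> m"
      using m' p by (cases "Suc m' = p") auto
    then have "u'' \<noteq> Suc u"
      using E_eq[OF m'(1) m(1)] m u'' by auto
    moreover have "cycle_vertex (Suc u'' mod p) = cycle_vertex (Suc u)"
      using linked[of m'] m m' u'' Suc_u by (simp add: cycle_edge_def)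
    ultimately have "u'' = u"
      using cycle_vertex_eqD[of "Suc u'' mod p" "Suc u"] u'' 2 Suc_u by (cases "Suc u'' = p") auto
    then have "m' = t"
      using E_eq[OF m'(1) t] u'' Et by simp
    then show ?thesis
      using m m' Suc_u by simp
  qed
qed

lemma walk_is_cycle_rotation:
  assumes p: "2 \<le> p" and i: "i \<in> PiE {0..<p} (\<lambda>_. {0..<N})" "distinct (walk p i)"
    "set (walk p i) = cycle_edge p ` {0..<p}"
  shows "\<exists>s<p. i = cycle_rotation p s"
proof -
  define E where "E t = (i t, i (Suc t mod p))" for t
  have walk: "walk p i = map E [0..<p]"
    by (simp add: walk_def E_def)
  have inj: "inj_on E {0..<p}"
    using i(2) by (simp add: walk distinct_map)
  have edges: "E ` {0..<p} = cycle_edge p ` {0..<p}"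
    using i(3) by (simp add: walk)
  have linked: "fst (E (Suc t mod p)) = snd (E t)" for t
    by (simp add: E_def)
  have "E 0 \<in> cycle_edge p ` {0..<p}"
    using edges p by auto
  then obtain s where s: "s < p" "E 0 = cycle_edge p s"
    by auto
  have along: "E t = cycle_edge p ((t + s) mod p)" if "t < p" for t
    using that
  proof (induction t)
    case 0
    then show ?case
      using s by simp
  next
    case (Suc t)
    have "E (Suc t mod p) = cycle_edge p (Suc ((t + s) mod p) mod p)"
      by (rule cycle_edge_successor[where E = E, OF p inj edges linked]) (use Suc p in simp_all)
    then show ?case
      using Suc.prems by (simp add: mod_Suc_eq)
  qed
  have "i = cycle_rotation p s"
  proof
    fix t
    show "i t = cycle_rotation p s t"
      using along[of t] i(1)
      by (cases "t < p")
        (auto simp: E_def cycle_edge_def cycle_rotation_def PiE_def extensional_def)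
  qed
  with s show ?thesis
    by blast
qed

lemma cycle_rotation_walk:
  assumes p: "0 < p" "p < 2 * N"
  shows "cycle_rotation p s \<in> PiE {0..<p} (\<lambda>_. {0..<N})"
    and "walk p (cycle_rotation p s) = map (\<lambda>t. cycle_edge p ((t + s) mod p)) [0..<p]"
    and "distinct (walk p (cycle_rotation p s))"
    and "set (walk p (cycle_rotation p s)) = cycle_edge p ` {0..<p}"
proof -
  have "cycle_vertex t < N" if "t < p" for t
    using that p(2) by (simp add: cycle_vertex_def)
  then show "cycle_rotation p s \<in> PiE {0..<p} (\<lambda>_. {0..<N})"
    by (auto simp: cycle_rotation_def PiE_def extensional_def)
  show walk: "walk p (cycle_rotation p s) = map (\<lambda>t. cycle_edge p ((t + s) mod p)) [0..<p]"
    unfolding walk_def using p(1)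
    by (auto simp: cycle_rotation_def cycle_edge_def mod_add_left_eq mod_Suc_eq)
  have shift: "(\<lambda>t. (t + s) mod p) ` {0..<p} = {0..<p}"
    by (rule endo_inj_surj) (use p(1) inj_on_add_mod in auto)
  show "distinct (walk p (cycle_rotation p s))"
    unfolding walk distinct_map
    using inj_on_add_mod inj_on_cycle_edge shift by (auto intro: comp_inj_on[unfolded comp_def])
  have "set (walk p (cycle_rotation p s)) = cycle_edge p ` (\<lambda>t. (t + s) mod p) ` {0..<p}"
    unfolding walk by (simp add: image_image)
  then show "set (walk p (cycle_rotation p s)) = cycle_edge p ` {0..<p}"
    unfolding shift .
qed

lemma qTr_coeff_cycle:
  assumes p: "2 \<le> p" "p < 2 * N"
  shows "qTr N p (cycle_edge p ` {0..<p})
    = (\<Sum>s\<in>{0..<p}. (-1) ^ inversions (walk p (cycle_rotation p s)))"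
proof -
  let ?P = "\<lambda>i. distinct (walk p i) \<and> set (walk p i) = cycle_edge p ` {0..<p}"
  have rotations: "{i \<in> PiE {0..<p} (\<lambda>_. {0..<N}). ?P i} = cycle_rotation p ` {0..<p}"
  proof
    show "cycle_rotation p ` {0..<p} \<subseteq> {i \<in> PiE {0..<p} (\<lambda>_. {0..<N}). ?P i}"
      using cycle_rotation_walk[of p N] p by auto
    show "{i \<in> PiE {0..<p} (\<lambda>_. {0..<N}). ?P i} \<subseteq> cycle_rotation p ` {0..<p}"
    proof
      fix i
      assume "i \<in> {i \<in> PiE {0..<p} (\<lambda>_. {0..<N}). ?P i}"
      then have "\<exists>s<p. i = cycle_rotation p s"
        by (intro walk_is_cycle_rotation[OF p(1)]) auto
      then show "i \<in> cycle_rotation p ` {0..<p}"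
        by auto
    qed
  qed
  have "inj_on (cycle_rotation p) {0..<p}"
  proof (rule inj_onI)
    fix s s'
    assume s: "s \<in> {0..<p}" "s' \<in> {0..<p}" and eq: "cycle_rotation p s = cycle_rotation p s'"
    have first_edge: "walk p (cycle_rotation p v) ! 0 = cycle_edge p v" if "v < p" for v
      using p that by (simp add: cycle_rotation_walk(2)[of p N] nth_map_upt)
    have "cycle_edge p s = cycle_edge p s'"
      using first_edge[of s] first_edge[of s'] eq s by simp
    then show "s = s'"
      by (rule inj_onD[OF inj_on_cycle_edge]) (use s in auto)
  qed
  moreover have "qTr N p (cycle_edge p ` {0..<p})
      = (\<Sum>i\<in>{i \<in> PiE {0..<p} (\<lambda>_. {0..<N}). ?P i}. (-1) ^ inversions (walk p i))"
    unfolding qTr_coeff by (rule sum.inter_filter[symmetric]) (simp add: finite_PiE)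
  ultimately show ?thesis
    unfolding rotations by (simp add: sum.reindex)
qed

lemma qTr_nonzero:
  assumes "odd p" "3 \<le> p" "p < 2 * N"
  shows "qTr N p \<noteq> 0"
proof
  assume "qTr N p = 0"
  moreover have p: "2 \<le> p"
    using assms(2) by simp
  then have "qTr N p (cycle_edge p ` {0..<p}) \<noteq> 0"
    unfolding qTr_coeff_cycle[OF p assms(3)] using assms(1)
    by (intro sum_neg_one_power_nonzero) auto
  ultimately show False
    by simp
qed

lemma rk_0_nonzero:
  assumes "odd p" "3 \<le> p" "p < 2 * N" "p \<le> N\<^sup>2"
  shows "rk N p 0 \<noteq> 0"
proof -
  have p: "0 < p"
    using assms(2) by simp
  have "ext_one \<in> hom N 0"
    by (auto simp: hom_def ext_one_def)
  then have "qTr N p \<in> Qmap N p ` hom N 0"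
    using wedge_ext_one_right[OF qTr_hom[OF p]] unfolding Qmap_def by (metis image_eqI)
  moreover have "Qmap N p ` hom N 0 \<subseteq> ext.span (ext_monomial ` Pow (gens N))"
    using hom_subset_span_monomials Qmap_hom[OF p] by blast
  ultimately have "0 < ext.dim (Qmap N p ` hom N 0)"
    using qTr_nonzero[OF assms(1-3)] by (intro ext.dim_pos_if_nonzero) auto
  then show ?thesis
    using assms(4) by (simp add: rk_def)
qed

theorem mainTheorem2:
  fixes N p :: nat
  assumes "N \<ge> 2" and "odd p" and "3 \<le> p" and "p \<le> 2 * N - 1"
  shows "(\<forall>R a b. R + p \<le> N^2 \<longrightarrow> a \<in> hom N R \<longrightarrow> b \<in> hom N (N^2 - p - R) \<longrightarrow>
            pairing N (Qmap N p a) b = (-1) ^ (p * R) * pairing N a (Qmap N p b))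
       \<and> (\<forall>R::int. rk N p R = rk N p (int (N^2) - int p - R))
       \<and> reflect_poly (rank_poly N p) = rank_poly N p
       \<and> degree (rank_poly N p) = N^2 - p"
proof -
  have p: "0 < p" "p < 2 * N"
    using assms by auto
  have "p \<le> N\<^sup>2"
    using p(2) by (cases N) (auto simp: power2_eq_square)
  have sym: "int (rk N p (int (N\<^sup>2 - p - n))) = int (rk N p (int n))" if "n \<le> N\<^sup>2 - p" for n
    using rk_symmetric[OF p(1), of N "int n"] that \<open>p \<le> N\<^sup>2\<close>
    by (simp add: of_nat_diff algebra_simps)
  have lead: "int (rk N p (int (N\<^sup>2 - p))) \<noteq> 0"
    using sym[of 0] rk_0_nonzero[OF assms(2,3) p(2) \<open>p \<le> N\<^sup>2\<close>] by simp
  show ?thesis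
    using pairing_Qmap_adjoint[OF p(1)] rk_symmetric[OF p(1)] palindromic_sum_monom[OF sym lead]
    unfolding rank_poly_def by blast
qed

end
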